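(* Let $\mathcal A$ be a mixed online algorithm for an online problem $(\mathcal X,\mathcal R,d)$ with start state $s^0$ and cost function $\mathrm{cost}$. Then there is a behavioral online algorithm $\mathcal A'$ for the same problem such that for every finite request sequence $\varrho=r^1\dots r^n$, $$E\big(\mathrm{cost}_{\mathcal A'}(\varrho)\big)=E\big(\mathrm{cost}_{\mathcal A}(\varrho)\big).$$
   Context: Online problem: a set $\mathcal X$ of states (configurations), a set $\mathcal R$ of requests, a start state $s^0\in\mathcal X$, a function $d:\mathcal X\times\mathcal X\to[0,\infty)$ with $d(x,x)=0$ and $d(x,z)\le d(x,y)+d(y,z)$, and a cost function $\mathrm{cost}:\mathcal X\times\mathcal R\times\mathcal X\to[0,\infty)$ ($\mathrm{cost}(x,r,y)$ is the cost of serving request $r$ while moving from $x$ to $y$) satisfying $\mathrm{cost}(u,r,v)\le d(u,x)+\mathrm{cost}(x,r,y)+d(y,v)$ for all $u,x,y,v\in\mathcal X$, $r\in\mathcal R$. $\Pi$ denotes the set of finitely supported probability distributions on $\mathcal X$; a point mass at $x$ is identified with $x$. For $\pi,\pi'\in\Pi$ and $r\in\mathcal R$, $\mathrm{cost}(\pi,r,\pi')$ is the minimum transportation cost: the minimum of $\sum_{x,y}\gamma(x,y)\,\mathrm{cost}(x,r,y)$ over all probability distributions $\gamma$ on $\mathrm{supp}(\pi)\times\mathrm{supp}(\pi')$ whose first marginal is $\pi$ and second marginal is $\pi'$. Mixed online algorithm $\mathcal A$: a set $\mathcal M$ of memory states, a start memory state $m^0$, and for each full state $k=(\pi,m)\in\Pi\times\mathcal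 M$ (reachable by $\mathcal A$) and each request $r$, a finite list of "subsequent" full states $k_i=(\pi_i,m_i)$, $i=1,\dots,p$, with weights $\lambda_i>0$, $\sum_i\lambda_i=1$. Starting from $k^0=(s^0,m^0)$, on request $r^t$ the algorithm moves from $k^{t-1}$ to $k^t=k_i$ (the subsequents for $(k^{t-1},r^t)$) with probability $\lambda_i$. The cost of such a step is $\mathrm{cost}_{\mathcal A}(k,r)=\mathrm{cost}(\pi,r,\bar\pi)$ where $\bar\pi=\sum_i\lambda_i\pi_i$, and $\mathrm{cost}_{\mathcal A}(\varrho)=\sum_{t=1}^n\mathrm{cost}_{\mathcal A}(k^{t-1},r^t)$ (a random variable). Behavioral online algorithm: a set $\mathcal M$ of memory states, a start memory state $m^0$, and for each $(x,m)\in\mathcal X\times\mathcal M$ and $r\in\mathcal R$ a finitely supported probability distribution on $\mathcal X\times\mathcal M$. Starting from $(x^0,m^0)=(s^0,m^0)$, on request $r^t$ it draws $(x^t,m^t)$ from the distribution associated with $(x^{t-1},m^{t-1},r^t)$. Its cost on $\varrho$ is the random variable $\sum_{t=1}^n\mathrm{cost}(x^{t-1},r^t,x^t)$. *)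

theory Defs
  imports "HOL-Probability.Probability"
begin

text \<open>Finitely supported probability distributions on states are modelled as
  pmfs with finite support.  A full state of a mixed algorithm is a pair
  (distribution on states, memory state).\<close>

type_synonym ('x, 'm) full_state = "'x pmf \<times> 'm"

definition couplings :: "'x pmf \<Rightarrow> 'x pmf \<Rightarrow> ('x \<times> 'x) pmf set" where
  "couplings \<pi> \<pi>' = {\<gamma>. map_pmf fst \<gamma> = \<pi> \<and> map_pmf snd \<gamma> = \<pi>'}"

definition transport_cost ::
  "('x \<Rightarrow> 'r \<Rightarrow> 'x \<Rightarrow> real) \<Rightarrow> 'x pmf \<Rightarrow> 'r \<Rightarrow> 'x pmf \<Rightarrow> real" where
  "transport_cost cost \<pi> r \<pi>' =
     Inf ((\<lambda>\<gamma>. \<Sum>(x,y)\<in>set_pmf \<pi> \<times> set_pmf \<pi>'. pmf \<gamma> (x,y) * cost x r y)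
          ` couplings \<pi> \<pi>')"

text \<open>Full states reachable by a mixed algorithm A (A k r is the distribution
  over subsequent full states, i.e. the list of k_i with weights lambda_i).\<close>

inductive_set reachable_mixed ::
  "(('x, 'm) full_state \<Rightarrow> 'r \<Rightarrow> ('x, 'm) full_state pmf) \<Rightarrow> 'x \<Rightarrow> 'm
     \<Rightarrow> ('x, 'm) full_state set"
  for A s0 m0 where
  start: "(return_pmf s0, m0) \<in> reachable_mixed A s0 m0"
| step: "k \<in> reachable_mixed A s0 m0 \<Longrightarrow> k' \<in> set_pmf (A k r)
           \<Longrightarrow> k' \<in> reachable_mixed A s0 m0"

definition mixed_alg ::
  "(('x, 'm) full_state \<Rightarrow> 'r \<Rightarrow> ('x, 'm) full_state pmf) \<Rightarrow> 'x \<Rightarrow> 'm \<Rightarrow> bool" where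
  "mixed_alg A s0 m0 \<longleftrightarrow>
     (\<forall>k\<in>reachable_mixed A s0 m0. \<forall>r.
        finite (set_pmf (A k r)) \<and> (\<forall>k'\<in>set_pmf (A k r). finite (set_pmf (fst k'))))"

definition mixed_step_cost ::
  "('x \<Rightarrow> 'r \<Rightarrow> 'x \<Rightarrow> real) \<Rightarrow> (('x, 'm) full_state \<Rightarrow> 'r \<Rightarrow> ('x, 'm) full_state pmf)
     \<Rightarrow> ('x, 'm) full_state \<Rightarrow> 'r \<Rightarrow> real" where
  "mixed_step_cost cost A k r = transport_cost cost (fst k) r (bind_pmf (A k r) fst)"

primrec mixed_cost_dist ::
  "('x \<Rightarrow> 'r \<Rightarrow> 'x \<Rightarrow> real) \<Rightarrow> (('x, 'm) full_state \<Rightarrow> 'r \<Rightarrow> ('x, 'm) full_state pmf)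
     \<Rightarrow> ('x, 'm) full_state \<Rightarrow> 'r list \<Rightarrow> real pmf" where
  "mixed_cost_dist cost A k [] = return_pmf 0"
| "mixed_cost_dist cost A k (r # rs) =
     bind_pmf (A k r) (\<lambda>k'. map_pmf (\<lambda>c. mixed_step_cost cost A k r + c)
                                   (mixed_cost_dist cost A k' rs))"

primrec behav_cost_dist ::
  "('x \<Rightarrow> 'r \<Rightarrow> 'x \<Rightarrow> real) \<Rightarrow> ('x \<Rightarrow> 'mm \<Rightarrow> 'r \<Rightarrow> ('x \<times> 'mm) pmf)
     \<Rightarrow> 'x \<Rightarrow> 'mm \<Rightarrow> 'r list \<Rightarrow> real pmf" where
  "behav_cost_dist cost B x m [] = return_pmf 0"
| "behav_cost_dist cost B x m (r # rs) =
     bind_pmf (B x m r) (\<lambda>(y, m'). map_pmf (\<lambda>c. cost x r y + c)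
                                        (behav_cost_dist cost B y m' rs))"

definition behavioral_alg :: "('x \<Rightarrow> 'mm \<Rightarrow> 'r \<Rightarrow> ('x \<times> 'mm) pmf) \<Rightarrow> bool" where
  "behavioral_alg B \<longleftrightarrow> (\<forall>x m r. finite (set_pmf (B x m r)))"

definition online_problem ::
  "('x \<Rightarrow> 'x \<Rightarrow> real) \<Rightarrow> ('x \<Rightarrow> 'r \<Rightarrow> 'x \<Rightarrow> real) \<Rightarrow> bool" where
  "online_problem d cost \<longleftrightarrow>
     (\<forall>x y. d x y \<ge> 0) \<and> (\<forall>x. d x x = 0) \<and> (\<forall>x y z. d x z \<le> d x y + d y z) \<and>
     (\<forall>x r y. cost x r y \<ge> 0) \<and>
     (\<forall>u x y v r. cost u r v \<le> d u x + cost x r y + d y v)"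

end

theory Submission
  imports Defs
begin

(* The behavioral algorithm remembers the current full state k = (pi, m) of the mixed algorithm
   besides its position x.  On request r it takes an optimal coupling gamma of pi and
   pibar = sum_i lambda_i pi_i and glues it, along the common marginal pibar, to the joint law of
   (y, k_i) that gives weight lambda_i pi_i(y).  In the glued law of (x, y, k_i) the pair (x, y) has
   law gamma, so the expected step cost is cost(pi, r, pibar), and (y, k_i) has the joint law above,
   so after the step the position is distributed by pi_i given the new memory k_i.  Moving from x to
   (y, k_i) by the conditional law given x therefore preserves the invariant
   "x is distributed by pi", and induction over the request sequence equates the expected costs. *)

lemma expectation_add_const:
  fixes f :: "'a \<Rightarrow> real"
  assumes "finite (set_pmf q)"
  shows "measure_pmf.expectation q (\<lambda>z. a + f z) = a + measure_pmf.expectation q f"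
  using assms by (simp add: integrable_measure_pmf_finite)

lemma expectation_bind_pmf_finite:
  fixes h :: "'b \<Rightarrow> real"
  assumes "finite (set_pmf p)" and "\<And>x. x \<in> set_pmf p \<Longrightarrow> finite (set_pmf (f x))"
  shows "measure_pmf.expectation (bind_pmf p f) h
           = measure_pmf.expectation p (\<lambda>x. measure_pmf.expectation (f x) h)"
  using assms by (simp add: pmf_expectation_bind[of "set_pmf p"] integral_measure_pmf[of "set_pmf p"])

lemma pmf_map_finite_support:
  assumes "finite S" and "set_pmf p \<subseteq> S"
  shows "pmf (map_pmf f p) y = (\<Sum>x\<in>{x\<in>S. f x = y}. pmf p x)"
proof -
  have "pmf (map_pmf f p) y = measure p (f -` {y} \<inter> set_pmf p)"
    by (simp add: pmf_map measure_Int_set_pmf)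
  also have "f -` {y} \<inter> set_pmf p = {x\<in>S. f x = y} \<inter> set_pmf p"
    using assms(2) by blast
  finally show ?thesis
    using assms(1) by (simp add: measure_Int_set_pmf measure_measure_pmf_finite)
qed

lemma bind_cond_pmf_fst: "bind_pmf (map_pmf fst J) (\<lambda>x. cond_pmf J {z. fst z = x}) = J"
  by (rule bind_cond_pmf_cancel) (auto simp: pmf_map vimage_def eq_commute)

lemma expectation_cond_pmf_fst:
  fixes g :: "'a \<times> 'b \<Rightarrow> real"
  assumes "finite (set_pmf J)"
  shows "measure_pmf.expectation (map_pmf fst J)
           (\<lambda>x. measure_pmf.expectation (map_pmf snd (cond_pmf J {w. fst w = x})) (\<lambda>z. g (x, z)))
         = measure_pmf.expectation J g"
proof -
  have set_cond: "set_pmf (cond_pmf J {w. fst w = x}) = set_pmf J \<inter> {w. fst w = x}"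
    if "x \<in> set_pmf (map_pmf fst J)" for x
    using that by (intro set_cond_pmf) auto
  have inner: "measure_pmf.expectation (cond_pmf J {w. fst w = x}) g
      = measure_pmf.expectation (map_pmf snd (cond_pmf J {w. fst w = x})) (\<lambda>z. g (x, z))"
    if "x \<in> set_pmf (map_pmf fst J)" for x
    using set_cond[OF that] by (auto intro!: integral_cong_AE simp: AE_measure_pmf_iff)
  have "measure_pmf.expectation J g
      = measure_pmf.expectation (bind_pmf (map_pmf fst J) (\<lambda>x. cond_pmf J {w. fst w = x})) g"
    by (simp add: bind_cond_pmf_fst)
  also have "\<dots> = measure_pmf.expectation (map_pmf fst J)
                    (\<lambda>x. measure_pmf.expectation (cond_pmf J {w. fst w = x}) g)"
    using assms set_cond by (intro expectation_bind_pmf_finite) auto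
  also have "\<dots> = measure_pmf.expectation (map_pmf fst J)
       (\<lambda>x. measure_pmf.expectation (map_pmf snd (cond_pmf J {w. fst w = x})) (\<lambda>z. g (x, z)))"
    using inner by (intro integral_cong_AE) (auto simp: AE_measure_pmf_iff)
  finally show ?thesis ..
qed

definition glue_pmf :: "('a \<times> 'b) pmf \<Rightarrow> ('b \<times> 'c) pmf \<Rightarrow> ('a \<times> 'b \<times> 'c) pmf" where
  "glue_pmf \<gamma> \<delta> = bind_pmf \<gamma> (\<lambda>(x, y). map_pmf (Pair x) (cond_pmf \<delta> {z. fst z = y}))"

context
  fixes \<gamma> :: "('a \<times> 'b) pmf" and \<delta> :: "('b \<times> 'c) pmf"
  assumes common_marginal: "map_pmf snd \<gamma> = map_pmf fst \<delta>"
begin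

lemma set_cond_pmf_glue:
  assumes "(x, y) \<in> set_pmf \<gamma>"
  shows "set_pmf (cond_pmf \<delta> {z. fst z = y}) = set_pmf \<delta> \<inter> {z. fst z = y}"
proof -
  have "y \<in> set_pmf (map_pmf fst \<delta>)"
    using assms by (force simp flip: common_marginal)
  then show ?thesis
    by (intro set_cond_pmf) force
qed

lemma map_glue_pmf_fst_snd: "map_pmf (\<lambda>(x, y, _). (x, y)) (glue_pmf \<gamma> \<delta>) = \<gamma>"
proof -
  have "map_pmf (\<lambda>z. (x, fst z)) (cond_pmf \<delta> {z. fst z = y}) = return_pmf (x, y)"
    if "(x, y) \<in> set_pmf \<gamma>" for x y
  proof -
    have "map_pmf (\<lambda>z. (x, fst z)) (cond_pmf \<delta> {z. fst z = y})
            = map_pmf (\<lambda>_. (x, y)) (cond_pmf \<delta> {z. fst z = y})"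
      using set_cond_pmf_glue[OF that] by (intro map_pmf_cong) auto
    then show ?thesis
      by simp
  qed
  then have "bind_pmf \<gamma> (\<lambda>(x, y). map_pmf (\<lambda>z. (x, fst z)) (cond_pmf \<delta> {z. fst z = y})) = bind_pmf \<gamma> return_pmf"
    by (intro bind_pmf_cong) auto
  moreover have "map_pmf (\<lambda>(x, y, _). (x, y)) (glue_pmf \<gamma> \<delta>)
      = bind_pmf \<gamma> (\<lambda>(x, y). map_pmf (\<lambda>z. (x, fst z)) (cond_pmf \<delta> {z. fst z = y}))"
    unfolding glue_pmf_def map_bind_pmf by (intro bind_pmf_cong) (auto simp: map_pmf_comp case_prod_beta)
  ultimately show ?thesis
    by (simp add: bind_return_pmf')
qed

lemma map_glue_pmf_snd: "map_pmf snd (glue_pmf \<gamma> \<delta>) = \<delta>"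
proof -
  have "map_pmf snd (glue_pmf \<gamma> \<delta>) = bind_pmf (map_pmf snd \<gamma>) (\<lambda>y. cond_pmf \<delta> {z. fst z = y})"
    unfolding glue_pmf_def map_bind_pmf bind_map_pmf by (simp add: map_pmf_comp case_prod_beta)
  also have "\<dots> = \<delta>"
    unfolding common_marginal by (rule bind_cond_pmf_fst)
  finally show ?thesis .
qed

end

lemma set_pmf_coupling:
  assumes "\<gamma> \<in> couplings p q"
  shows "set_pmf \<gamma> \<subseteq> set_pmf p \<times> set_pmf q"
  using assms unfolding couplings_def by force

lemma expectation_coupling:
  fixes c :: "'x \<Rightarrow> 'x \<Rightarrow> real"
  assumes "\<gamma> \<in> couplings p q" and "finite (set_pmf p)" and "finite (set_pmf q)"
  shows "measure_pmf.expectation \<gamma> (\<lambda>(x, y). c x y)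
           = (\<Sum>(x, y)\<in>set_pmf p \<times> set_pmf q. pmf \<gamma> (x, y) * c x y)"
  using assms set_pmf_coupling[OF assms(1)]
  by (subst integral_measure_pmf_real[of "set_pmf p \<times> set_pmf q"])
     (auto simp: case_prod_beta mult.commute intro!: sum.cong)

definition transport_polytope :: "'x pmf \<Rightarrow> 'x pmf \<Rightarrow> ('x \<times> 'x \<Rightarrow> real) set" where
  "transport_polytope p q =
     {f. (\<forall>z. f z \<in> {0..1}) \<and> (\<forall>z. z \<notin> set_pmf p \<times> set_pmf q \<longrightarrow> f z = 0) \<and>
         (\<forall>x. (\<Sum>z\<in>{z\<in>set_pmf p \<times> set_pmf q. fst z = x}. f z) = pmf p x) \<and>
         (\<forall>y. (\<Sum>z\<in>{z\<in>set_pmf p \<times> set_pmf q. snd z = y}. f z) = pmf q y)}"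

lemma compact_unit_cube_fun: "compact {f :: 'a \<Rightarrow> real. \<forall>z. f z \<in> {0..1}}"
proof -
  have "compactin (product_topology (\<lambda>_. euclidean) UNIV) (PiE UNIV (\<lambda>_::'a. {0..1::real}))"
    by (subst compactin_PiE) auto
  moreover have "PiE UNIV (\<lambda>_::'a. {0..1::real}) = {f. \<forall>z. f z \<in> {0..1}}"
    by auto
  ultimately show ?thesis
    by (simp add: euclidean_product_topology)
qed

lemma compact_transport_polytope: "compact (transport_polytope p q)"
proof -
  define S where "S = set_pmf p \<times> set_pmf q"
  have "transport_polytope p q = {f. \<forall>z. f z \<in> {0..1}} \<inter>
          ((\<Inter>z\<in>-S. {f. f z = 0}) \<inter> (\<Inter>x. {f. (\<Sum>z\<in>{z\<in>S. fst z = x}. f z) = pmf p x})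
             \<inter> (\<Inter>y. {f. (\<Sum>z\<in>{z\<in>S. snd z = y}. f z) = pmf q y}))"
    by (auto simp: transport_polytope_def S_def)
  also have "compact \<dots>"
    by (intro compact_Int_closed compact_unit_cube_fun closed_Int closed_INT ballI closed_Collect_eq
          continuous_on_sum continuous_on_const continuous_on_product_coordinates)
  finally show ?thesis .
qed

lemma pmf_coupling_in_transport_polytope:
  assumes "\<gamma> \<in> couplings p q" and "finite (set_pmf p)" and "finite (set_pmf q)"
  shows "pmf \<gamma> \<in> transport_polytope p q"
proof -
  define S where "S = set_pmf p \<times> set_pmf q"
  have supp: "set_pmf \<gamma> \<subseteq> S"
    using set_pmf_coupling[OF assms(1)] by (simp add: S_def)
  have fin: "finite S"
    using assms(2,3) by (simp add: S_def)
  have "pmf p x = (\<Sum>z\<in>{z\<in>S. fst z = x}. pmf \<gamma> z)" for x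
    using assms(1) pmf_map_finite_support[OF fin supp, of fst] by (auto simp: couplings_def)
  moreover have "pmf q y = (\<Sum>z\<in>{z\<in>S. snd z = y}. pmf \<gamma> z)" for y
    using assms(1) pmf_map_finite_support[OF fin supp, of snd] by (auto simp: couplings_def)
  ultimately show ?thesis
    using supp by (auto simp: transport_polytope_def S_def pmf_le_1 set_pmf_iff)
qed

lemma transport_polytope_eq_pmf_coupling:
  assumes "f \<in> transport_polytope p q" and "finite (set_pmf p)" and "finite (set_pmf q)"
  shows "\<exists>\<gamma>\<in>couplings p q. pmf \<gamma> = f"
proof -
  define S where "S = set_pmf p \<times> set_pmf q"
  have fin: "finite S"
    using assms(2,3) by (simp add: S_def)
  have nonneg: "\<And>z. 0 \<le> f z" and off_S: "\<And>z. z \<notin> S \<Longrightarrow> f z = 0"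
    and marg_fst: "\<And>x. (\<Sum>z\<in>{z\<in>S. fst z = x}. f z) = pmf p x"
    and marg_snd: "\<And>y. (\<Sum>z\<in>{z\<in>S. snd z = y}. f z) = pmf q y"
    using assms(1) by (auto simp: transport_polytope_def S_def)
  have "fst ` S = set_pmf p"
    using set_pmf_not_empty[of q] by (auto simp: S_def)
  then have "(\<Sum>z\<in>S. f z) = (\<Sum>x\<in>set_pmf p. pmf p x)"
    using fin by (simp add: sum.image_gen[of S f fst] marg_fst)
  also have "\<dots> = 1"
    using assms(2) by (rule sum_pmf_eq_1) simp
  finally have "(\<integral>\<^sup>+z. ennreal (f z) \<partial>count_space UNIV) = 1"
    using fin off_S nonneg by (subst nn_integral_count_space'[of S]) auto
  then have pmf_embed: "pmf (embed_pmf f) = f"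
    using pmf_embed_pmf[of f, OF nonneg] by auto
  have supp: "set_pmf (embed_pmf f) \<subseteq> S"
    using off_S by (force simp: set_pmf_iff pmf_embed)
  have "embed_pmf f \<in> couplings p q"
    unfolding couplings_def
    using pmf_map_finite_support[OF fin supp, of fst] pmf_map_finite_support[OF fin supp, of snd]
    by (auto intro!: pmf_eqI simp: pmf_embed marg_fst marg_snd)
  with pmf_embed show ?thesis
    by blast
qed

lemma optimal_coupling_exists:
  fixes c :: "'x \<Rightarrow> 'x \<Rightarrow> real"
  assumes "finite (set_pmf p)" and "finite (set_pmf q)"
  shows "\<exists>\<gamma>\<in>couplings p q. \<forall>\<gamma>'\<in>couplings p q.
           measure_pmf.expectation \<gamma> (\<lambda>(x, y). c x y) \<le> measure_pmf.expectation \<gamma>' (\<lambda>(x, y). c x y)"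
proof -
  define obj where "obj f = (\<Sum>(x, y)\<in>set_pmf p \<times> set_pmf q. f (x, y) * c x y)"
    for f :: "'x \<times> 'x \<Rightarrow> real"
  have obj_pmf: "measure_pmf.expectation \<gamma> (\<lambda>(x, y). c x y) = obj (pmf \<gamma>)"
    if "\<gamma> \<in> couplings p q" for \<gamma>
    using expectation_coupling[OF that assms] by (simp add: obj_def)
  have "continuous_on (transport_polytope p q) obj"
    unfolding obj_def case_prod_beta
    by (intro continuous_on_sum continuous_on_mult continuous_on_const
          continuous_on_product_coordinates[THEN continuous_on_subset]) auto
  moreover have "pmf (pair_pmf p q) \<in> transport_polytope p q"
    using assms by (intro pmf_coupling_in_transport_polytope)
      (auto simp: couplings_def map_fst_pair_pmf map_snd_pair_pmf)
  ultimately obtain f where "f \<in> transport_polytope p q"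
    and f_min: "\<And>g. g \<in> transport_polytope p q \<Longrightarrow> obj f \<le> obj g"
    using continuous_attains_inf[OF compact_transport_polytope] by blast
  then obtain \<gamma> where \<gamma>: "\<gamma> \<in> couplings p q" and "pmf \<gamma> = f"
    using transport_polytope_eq_pmf_coupling assms by blast
  show ?thesis
  proof (intro bexI ballI)
    fix \<gamma>' assume "\<gamma>' \<in> couplings p q"
    then show "measure_pmf.expectation \<gamma> (\<lambda>(x, y). c x y)
                 \<le> measure_pmf.expectation \<gamma>' (\<lambda>(x, y). c x y)"
      using f_min pmf_coupling_in_transport_polytope[OF _ assms] \<gamma> \<open>pmf \<gamma> = f\<close>
      by (simp add: obj_pmf)
  qed (fact \<gamma>)
qed

lemma transport_cost_attained:
  assumes "finite (set_pmf p)" and "finite (set_pmf q)"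
  shows "\<exists>\<gamma>\<in>couplings p q.
           measure_pmf.expectation \<gamma> (\<lambda>(x, y). cost x r y) = transport_cost cost p r q"
proof -
  obtain \<gamma> where \<gamma>: "\<gamma> \<in> couplings p q" and min: "\<forall>\<gamma>'\<in>couplings p q.
      measure_pmf.expectation \<gamma> (\<lambda>(x, y). cost x r y) \<le> measure_pmf.expectation \<gamma>' (\<lambda>(x, y). cost x r y)"
    using optimal_coupling_exists[OF assms] by blast
  have "transport_cost cost p r q
          = Inf ((\<lambda>\<gamma>. measure_pmf.expectation \<gamma> (\<lambda>(x, y). cost x r y)) ` couplings p q)"
    unfolding transport_cost_def using expectation_coupling[OF _ assms]
    by (intro arg_cong[where f = Inf] image_cong) auto
  also have "\<dots> = measure_pmf.expectation \<gamma> (\<lambda>(x, y). cost x r y)"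
    using \<gamma> min by (intro cInf_eq_minimum) auto
  finally show ?thesis
    using \<gamma> by metis
qed

definition optimal_coupling ::
  "('x \<Rightarrow> 'r \<Rightarrow> 'x \<Rightarrow> real) \<Rightarrow> 'x pmf \<Rightarrow> 'r \<Rightarrow> 'x pmf \<Rightarrow> ('x \<times> 'x) pmf" where
  "optimal_coupling cost p r q = (SOME \<gamma>. \<gamma> \<in> couplings p q \<and>
     measure_pmf.expectation \<gamma> (\<lambda>(x, y). cost x r y) = transport_cost cost p r q)"

lemma optimal_coupling:
  assumes "finite (set_pmf p)" and "finite (set_pmf q)"
  shows "optimal_coupling cost p r q \<in> couplings p q"
    and "measure_pmf.expectation (optimal_coupling cost p r q) (\<lambda>(x, y). cost x r y)
           = transport_cost cost p r q"
  using someI_ex[OF transport_cost_attained[OF assms, of cost r, unfolded Bex_def]]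
  by (simp_all add: optimal_coupling_def)

lemma finite_set_behav_cost_dist:
  assumes "behavioral_alg B"
  shows "finite (set_pmf (behav_cost_dist cost B x m rs))"
  using assms by (induction rs arbitrary: x m) (auto simp: behavioral_alg_def)

lemma expectation_behav_cost_dist_Cons:
  assumes "behavioral_alg B"
  shows "measure_pmf.expectation (behav_cost_dist cost B x m (r # rs)) (\<lambda>c. c)
           = measure_pmf.expectation (B x m r)
               (\<lambda>(y, m'). cost x r y + measure_pmf.expectation (behav_cost_dist cost B y m' rs) (\<lambda>c. c))"
  using assms finite_set_behav_cost_dist[OF assms]
  by (auto simp: expectation_bind_pmf_finite behavioral_alg_def expectation_add_const case_prod_beta
        intro!: integral_cong_AE)

lemma expectation_mixed_cost_dist_Cons:
  assumes "finite (set_pmf (A k r))"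
    and "\<And>k'. k' \<in> set_pmf (A k r) \<Longrightarrow> finite (set_pmf (mixed_cost_dist cost A k' rs))"
  shows "measure_pmf.expectation (mixed_cost_dist cost A k (r # rs)) (\<lambda>c. c)
           = mixed_step_cost cost A k r
             + measure_pmf.expectation (A k r) (\<lambda>k'. measure_pmf.expectation (mixed_cost_dist cost A k' rs) (\<lambda>c. c))"
proof -
  have "measure_pmf.expectation (mixed_cost_dist cost A k (r # rs)) (\<lambda>c. c)
      = measure_pmf.expectation (A k r)
          (\<lambda>k'. measure_pmf.expectation (mixed_cost_dist cost A k' rs) (\<lambda>c. mixed_step_cost cost A k r + c))"
    using assms by (simp add: expectation_bind_pmf_finite)
  also have "\<dots> = measure_pmf.expectation (A k r)
      (\<lambda>k'. mixed_step_cost cost A k r + measure_pmf.expectation (mixed_cost_dist cost A k' rs) (\<lambda>c. c))"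
    using assms(2) by (intro integral_cong_AE) (auto simp: AE_measure_pmf_iff expectation_add_const)
  also have "\<dots> = mixed_step_cost cost A k r
      + measure_pmf.expectation (A k r) (\<lambda>k'. measure_pmf.expectation (mixed_cost_dist cost A k' rs) (\<lambda>c. c))"
    using assms(1) by (rule expectation_add_const)
  finally show ?thesis .
qed

lemma finite_set_pmf_reachable:
  assumes "mixed_alg A s0 m0" and "k \<in> reachable_mixed A s0 m0"
  shows "finite (set_pmf (fst k))"
  using assms(2,1) by (induction rule: reachable_mixed.induct) (auto simp: mixed_alg_def)

lemma finite_set_mixed_cost_dist:
  assumes "mixed_alg A s0 m0" and "k \<in> reachable_mixed A s0 m0"
  shows "finite (set_pmf (mixed_cost_dist cost A k rs))"
  using assms(2)
proof (induction rs arbitrary: k)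
  case (Cons r rs)
  then show ?case
    using assms(1) reachable_mixed.step[OF Cons.prems] by (auto simp: mixed_alg_def)
qed simp

definition next_state_law ::
  "(('x, 'm) full_state \<Rightarrow> 'r \<Rightarrow> ('x, 'm) full_state pmf) \<Rightarrow> ('x, 'm) full_state \<Rightarrow> 'r
     \<Rightarrow> ('x \<times> ('x, 'm) full_state) pmf" where
  "next_state_law A k r = bind_pmf (A k r) (\<lambda>k'. map_pmf (\<lambda>y. (y, k')) (fst k'))"

lemma map_fst_next_state_law: "map_pmf fst (next_state_law A k r) = bind_pmf (A k r) fst"
  by (simp add: next_state_law_def map_bind_pmf map_pmf_comp)

lemma finite_set_next_state_law:
  assumes "mixed_alg A s0 m0" and "k \<in> reachable_mixed A s0 m0"
  shows "finite (set_pmf (next_state_law A k r))"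
  using assms by (auto simp: next_state_law_def mixed_alg_def)

lemma expectation_next_state_law:
  fixes h :: "'x \<Rightarrow> ('x, 'm) full_state \<Rightarrow> real"
  assumes "finite (set_pmf (A k r))" and "\<And>k'. k' \<in> set_pmf (A k r) \<Longrightarrow> finite (set_pmf (fst k'))"
  shows "measure_pmf.expectation (next_state_law A k r) (\<lambda>(y, k'). h y k')
           = measure_pmf.expectation (A k r) (\<lambda>k'. measure_pmf.expectation (fst k') (\<lambda>y. h y k'))"
  using assms by (simp add: next_state_law_def expectation_bind_pmf_finite)

definition step_law ::
  "('x \<Rightarrow> 'r \<Rightarrow> 'x \<Rightarrow> real) \<Rightarrow> (('x, 'm) full_state \<Rightarrow> 'r \<Rightarrow> ('x, 'm) full_state pmf)
     \<Rightarrow> ('x, 'm) full_state \<Rightarrow> 'r \<Rightarrow> ('x \<times> 'x \<times> ('x, 'm) full_state) pmf" where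
  "step_law cost A k r =
     glue_pmf (optimal_coupling cost (fst k) r (bind_pmf (A k r) fst)) (next_state_law A k r)"

context
  fixes cost :: "'x \<Rightarrow> 'r \<Rightarrow> 'x \<Rightarrow> real"
    and A :: "('x, 'm) full_state \<Rightarrow> 'r \<Rightarrow> ('x, 'm) full_state pmf"
    and k :: "('x, 'm) full_state" and r :: 'r
  assumes finite_pos: "finite (set_pmf (fst k))"
    and finite_next: "finite (set_pmf (next_state_law A k r))"
begin

lemma optimal_coupling_step:
  "optimal_coupling cost (fst k) r (bind_pmf (A k r) fst) \<in> couplings (fst k) (bind_pmf (A k r) fst)"
  "measure_pmf.expectation (optimal_coupling cost (fst k) r (bind_pmf (A k r) fst)) (\<lambda>(x, y). cost x r y)
     = mixed_step_cost cost A k r"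
  using optimal_coupling[OF finite_pos, of "bind_pmf (A k r) fst" cost r] finite_next
  by (simp_all add: mixed_step_cost_def flip: map_fst_next_state_law)

lemma step_law_marginals:
  "map_pmf (\<lambda>(x, y, _). (x, y)) (step_law cost A k r) = optimal_coupling cost (fst k) r (bind_pmf (A k r) fst)"
  "map_pmf snd (step_law cost A k r) = next_state_law A k r"
  "map_pmf fst (step_law cost A k r) = fst k"
proof -
  have common: "map_pmf snd (optimal_coupling cost (fst k) r (bind_pmf (A k r) fst))
                  = map_pmf fst (next_state_law A k r)"
    using optimal_coupling_step(1) by (simp add: couplings_def map_fst_next_state_law)
  show fst_snd: "map_pmf (\<lambda>(x, y, _). (x, y)) (step_law cost A k r)
                   = optimal_coupling cost (fst k) r (bind_pmf (A k r) fst)"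
    unfolding step_law_def by (rule map_glue_pmf_fst_snd[OF common])
  show "map_pmf snd (step_law cost A k r) = next_state_law A k r"
    unfolding step_law_def by (rule map_glue_pmf_snd[OF common])
  have "map_pmf fst (step_law cost A k r) = map_pmf fst (map_pmf (\<lambda>(x, y, _). (x, y)) (step_law cost A k r))"
    by (simp add: map_pmf_comp case_prod_beta)
  then show "map_pmf fst (step_law cost A k r) = fst k"
    using optimal_coupling_step(1) by (simp add: fst_snd couplings_def)
qed

lemma expectation_step_law_cost:
  "measure_pmf.expectation (step_law cost A k r) (\<lambda>(x, y, _). cost x r y) = mixed_step_cost cost A k r"
proof -
  have "measure_pmf.expectation (step_law cost A k r) (\<lambda>(x, y, _). cost x r y)
      = measure_pmf.expectation (map_pmf (\<lambda>(x, y, _). (x, y)) (step_law cost A k r)) (\<lambda>(x, y). cost x r y)"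
    by (simp add: case_prod_unfold)
  then show ?thesis
    by (simp add: step_law_marginals(1) optimal_coupling_step(2))
qed

lemma finite_set_step_law: "finite (set_pmf (step_law cost A k r))"
proof -
  have "set_pmf (step_law cost A k r) \<subseteq> set_pmf (fst k) \<times> set_pmf (next_state_law A k r)"
  proof
    fix z assume "z \<in> set_pmf (step_law cost A k r)"
    then have "fst z \<in> set_pmf (map_pmf fst (step_law cost A k r))"
      and "snd z \<in> set_pmf (map_pmf snd (step_law cost A k r))"
      by auto
    then show "z \<in> set_pmf (fst k) \<times> set_pmf (next_state_law A k r)"
      by (simp add: mem_Times_iff step_law_marginals(2,3))
  qed
  then show ?thesis
    using finite_pos finite_next by (auto intro: finite_subset)
qed

end

definition behavioral_of_mixed ::
  "('x \<Rightarrow> 'r \<Rightarrow> 'x \<Rightarrow> real) \<Rightarrow> (('x, 'm) full_state \<Rightarrow> 'r \<Rightarrow> ('x, 'm) full_state pmf)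
     \<Rightarrow> 'x \<Rightarrow> ('x, 'm) full_state \<Rightarrow> 'r \<Rightarrow> ('x \<times> ('x, 'm) full_state) pmf" where
  \<comment> \<open>\<open>cond_pmf\<close> is unspecified on null events, hence the guard; the fallback branch is never
     taken from a reachable full state and only keeps the supports finite.\<close>
  "behavioral_of_mixed cost A x k r =
     (if finite (set_pmf (fst k)) \<and> finite (set_pmf (next_state_law A k r)) \<and> x \<in> set_pmf (fst k)
      then map_pmf snd (cond_pmf (step_law cost A k r) {w. fst w = x})
      else return_pmf (x, k))"

lemma behavioral_alg_behavioral_of_mixed: "behavioral_alg (behavioral_of_mixed cost A)"
  unfolding behavioral_alg_def
proof (intro allI)
  fix x k r
  show "finite (set_pmf (behavioral_of_mixed cost A x k r))"
  proof (cases "finite (set_pmf (fst k)) \<and> finite (set_pmf (next_state_law A k r)) \<and> x \<in> set_pmf (fst k)")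
    case True
    then have "x \<in> set_pmf (map_pmf fst (step_law cost A k r))"
      using step_law_marginals(3)[of k A r cost] by simp
    then have "set_pmf (cond_pmf (step_law cost A k r) {w. fst w = x}) \<subseteq> set_pmf (step_law cost A k r)"
      by (subst set_cond_pmf) auto
    then show ?thesis
      using True finite_set_step_law[of k A r cost] by (auto simp: behavioral_of_mixed_def intro: finite_subset)
  next
    case False
    then show ?thesis
      unfolding behavioral_of_mixed_def if_not_P[OF False] by simp
  qed
qed

lemma expectation_behavioral_of_mixed_step:
  fixes h :: "'x \<Rightarrow> ('x, 'm) full_state \<Rightarrow> real"
  assumes fin_pos: "finite (set_pmf (fst k))" and fin_next: "finite (set_pmf (next_state_law A k r))"
  shows "measure_pmf.expectation (fst k)
           (\<lambda>x. measure_pmf.expectation (behavioral_of_mixed cost A x k r) (\<lambda>(y, k'). cost x r y + h y k'))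
         = mixed_step_cost cost A k r + measure_pmf.expectation (next_state_law A k r) (\<lambda>(y, k'). h y k')"
proof -
  let ?J = "step_law cost A k r"
  note marginals = step_law_marginals[OF fin_pos fin_next, where cost = cost]
  have fin_J: "finite (set_pmf ?J)"
    using finite_set_step_law[OF fin_pos fin_next] .
  have "measure_pmf.expectation (fst k)
          (\<lambda>x. measure_pmf.expectation (behavioral_of_mixed cost A x k r) (\<lambda>(y, k'). cost x r y + h y k'))
      = measure_pmf.expectation (map_pmf fst ?J)
          (\<lambda>x. measure_pmf.expectation (map_pmf snd (cond_pmf ?J {w. fst w = x}))
                 (\<lambda>(y, k'). cost x r y + h y k'))"
    unfolding marginals(3)
    by (intro integral_cong_AE) (auto simp: AE_measure_pmf_iff behavioral_of_mixed_def fin_pos fin_next)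
  also have "\<dots> = measure_pmf.expectation ?J (\<lambda>(x, y, k'). cost x r y + h y k')"
    using expectation_cond_pmf_fst[OF fin_J, where g = "\<lambda>(x, y, k'). cost x r y + h y k'"]
    by simp
  also have "\<dots> = measure_pmf.expectation ?J (\<lambda>(x, y, _). cost x r y)
                  + measure_pmf.expectation ?J (\<lambda>(_, y, k'). h y k')"
    unfolding case_prod_beta using fin_J
    by (intro Bochner_Integration.integral_add integrable_measure_pmf_finite)
  also have "measure_pmf.expectation ?J (\<lambda>(x, y, _). cost x r y) = mixed_step_cost cost A k r"
    using expectation_step_law_cost[OF fin_pos fin_next] .
  also have "measure_pmf.expectation ?J (\<lambda>(_, y, k'). h y k')
      = measure_pmf.expectation (next_state_law A k r) (\<lambda>(y, k'). h y k')"
    by (simp flip: marginals(2) add: case_prod_unfold)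
  finally show ?thesis .
qed

lemma expectation_behavioral_of_mixed:
  assumes "mixed_alg A s0 m0" and "k \<in> reachable_mixed A s0 m0"
  shows "measure_pmf.expectation (fst k)
           (\<lambda>x. measure_pmf.expectation (behav_cost_dist cost (behavioral_of_mixed cost A) x k rs) (\<lambda>c. c))
         = measure_pmf.expectation (mixed_cost_dist cost A k rs) (\<lambda>c. c)"
  using assms(2)
proof (induction rs arbitrary: k)
  case (Cons r rs)
  let ?Eb = "\<lambda>y k'. measure_pmf.expectation (behav_cost_dist cost (behavioral_of_mixed cost A) y k' rs) (\<lambda>c. c)"
  have reach: "k' \<in> reachable_mixed A s0 m0" if "k' \<in> set_pmf (A k r)" for k'
    using reachable_mixed.step[OF Cons.prems that] .
  have fin_A: "finite (set_pmf (A k r))"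
    and fin_pos': "\<And>k'. k' \<in> set_pmf (A k r) \<Longrightarrow> finite (set_pmf (fst k'))"
    using assms(1) Cons.prems by (auto simp: mixed_alg_def)
  have "measure_pmf.expectation (fst k)
          (\<lambda>x. measure_pmf.expectation (behav_cost_dist cost (behavioral_of_mixed cost A) x k (r # rs)) (\<lambda>c. c))
      = measure_pmf.expectation (fst k)
          (\<lambda>x. measure_pmf.expectation (behavioral_of_mixed cost A x k r) (\<lambda>(y, k'). cost x r y + ?Eb y k'))"
    by (simp only: expectation_behav_cost_dist_Cons[OF behavioral_alg_behavioral_of_mixed])
  also have "\<dots> = mixed_step_cost cost A k r
      + measure_pmf.expectation (next_state_law A k r) (\<lambda>(y, k'). ?Eb y k')"
    using finite_set_pmf_reachable[OF assms(1) Cons.prems] finite_set_next_state_law[OF assms(1) Cons.prems]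
    by (rule expectation_behavioral_of_mixed_step)
  also have "measure_pmf.expectation (next_state_law A k r) (\<lambda>(y, k'). ?Eb y k')
      = measure_pmf.expectation (A k r) (\<lambda>k'. measure_pmf.expectation (fst k') (\<lambda>y. ?Eb y k'))"
    using fin_A fin_pos' by (rule expectation_next_state_law)
  also have "\<dots> = measure_pmf.expectation (A k r) (\<lambda>k'. measure_pmf.expectation (mixed_cost_dist cost A k' rs) (\<lambda>c. c))"
    using Cons.IH reach by (auto simp: AE_measure_pmf_iff intro!: integral_cong_AE)
  also have "mixed_step_cost cost A k r + \<dots>
      = measure_pmf.expectation (mixed_cost_dist cost A k (r # rs)) (\<lambda>c. c)"
    using fin_A finite_set_mixed_cost_dist[OF assms(1) reach]
    by (rule expectation_mixed_cost_dist_Cons[symmetric])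
  finally show ?case .
qed simp

theorem mainTheorem1:
  fixes d :: "'x \<Rightarrow> 'x \<Rightarrow> real"
    and cost :: "'x \<Rightarrow> 'r \<Rightarrow> 'x \<Rightarrow> real"
    and s0 :: 'x
    and A :: "('x, 'm) full_state \<Rightarrow> 'r \<Rightarrow> ('x, 'm) full_state pmf"
    and m0 :: 'm
  assumes "online_problem d cost"
    and "mixed_alg A s0 m0"
  shows "\<exists>(B :: 'x \<Rightarrow> ('x, 'm) full_state \<Rightarrow> 'r \<Rightarrow> ('x \<times> ('x, 'm) full_state) pmf) m0'.
           behavioral_alg B \<and>
           (\<forall>\<rho>. measure_pmf.expectation (behav_cost_dist cost B s0 m0' \<rho>) (\<lambda>c. c)
                = measure_pmf.expectation (mixed_cost_dist cost A (return_pmf s0, m0) \<rho>) (\<lambda>c. c))"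
proof (intro exI conjI allI)
  show "behavioral_alg (behavioral_of_mixed cost A)"
    by (rule behavioral_alg_behavioral_of_mixed)
  fix \<rho>
  show "measure_pmf.expectation (behav_cost_dist cost (behavioral_of_mixed cost A) s0 (return_pmf s0, m0) \<rho>) (\<lambda>c. c)
          = measure_pmf.expectation (mixed_cost_dist cost A (return_pmf s0, m0) \<rho>) (\<lambda>c. c)"
    using expectation_behavioral_of_mixed[OF assms(2) reachable_mixed.start, of cost \<rho>] by simp
qed

end
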